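(* Suppose $\gamma\ge\sqrt{8M}$ and $U:\mathbb R^d\to\mathbb R$ is twice continuously differentiable with $M$-Lipschitz gradient and $m$-strongly convex, with minimizer $x^*$; let $z^*=(x^*,0_d)$, $\lambda=\min(\frac14,\frac m{\gamma^2})$ and \[\mathcal V(x,v)=U(x)-U(x^* )+\frac14\gamma^2\big(\|x-x^*+\gamma^{-1}v\|^2+\|\gamma^{-1}v\|^2-\lambda\|x-x^*\|^2\big).\] Then for every $z=(x,v)\in\mathbb R^{2d}$, $\mathcal V(x,v)\ge0$ and \[\mathcal V^{1/2}(x,v)\ge\frac18(\gamma\|x-x^*\|+\|v\|)\ge\frac{\sqrt M}8\|z-z^*\|_{a,b}.\] Moreover, $\mathcal V^{1/2}$ is $8\gamma$-Lipschitz with respect to $\|\cdot\|_{a,b}$.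
   Context: $a=1/M$, $b=1/\gamma$, and $\|z\|_{a,b}^2=\|x\|^2+2b\langle x,v\rangle+a\|v\|^2$ for $z=(x,v)\in\mathbb R^{2d}$. *)

theory Defs
  imports "HOL-Analysis.Analysis"
begin

definition strongly_convex :: "real \<Rightarrow> ('a::real_inner \<Rightarrow> real) \<Rightarrow> bool" where
  "strongly_convex m U \<longleftrightarrow>
     (\<forall>x y. \<forall>t\<in>{0..1}. U ((1 - t) *\<^sub>R x + t *\<^sub>R y)
        \<le> (1 - t) * U x + t * U y - m / 2 * t * (1 - t) * (norm (x - y))\<^sup>2)"

definition C2_with_gradient :: "('a::euclidean_space \<Rightarrow> real) \<Rightarrow> ('a \<Rightarrow> 'a) \<Rightarrow> bool" where
  "C2_with_gradient U G \<longleftrightarrow>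
     (\<forall>x. (U has_derivative (\<lambda>h. G x \<bullet> h)) (at x)) \<and>
     (\<exists>H :: 'a \<Rightarrow> ('a \<Rightarrow>\<^sub>L 'a). (\<forall>x. (G has_derivative blinfun_apply (H x)) (at x))
          \<and> continuous_on UNIV H)"

definition abnorm :: "real \<Rightarrow> real \<Rightarrow> 'a::real_inner \<Rightarrow> 'a \<Rightarrow> real" where
  "abnorm a b x v = sqrt ((norm x)\<^sup>2 + 2 * b * (x \<bullet> v) + a * (norm v)\<^sup>2)"

definition lyapV :: "('a::real_inner \<Rightarrow> real) \<Rightarrow> real \<Rightarrow> real \<Rightarrow> 'a \<Rightarrow> 'a \<Rightarrow> 'a \<Rightarrow> real" where
  "lyapV U \<gamma> lam xs x v = U x - U xs + 1/4 * \<gamma>\<^sup>2 *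
     ((norm (x - xs + v /\<^sub>R \<gamma>))\<^sup>2 + (norm (v /\<^sub>R \<gamma>))\<^sup>2 - lam * (norm (x - xs))\<^sup>2)"

end

theory Submission
  imports Defs
begin

text \<open>Completing the square,
  V(x, v) = (U x - U x*) + |v + (\<gamma>/2)(x - x*)|^2 / 2 + (\<gamma>^2/4)(1/2 - \<lambda>) |x - x*|^2,
  so sqrt V is the Euclidean norm of a triple whose components are all Lipschitz in (x, v).
  For the first component, sqrt (U - U x*), this follows from the descent lemma together with
  |\<nabla>U x|^2 \<le> 2M (U x - U x*). The lower bound on sqrt V uses \<lambda> \<le> 1/4, the Lipschitz bound
  the reverse triangle inequality, and \<gamma>^2 \<ge> 8M makes \<gamma>|x| + |v| comparable with
  \<gamma> ||(x, v)||_{a,b} and with sqrt M ||(x, v)||_{a,b}.\<close>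

lemma lipschitz_gradient_upper_bound:
  fixes U :: "'a::real_inner \<Rightarrow> real"
  assumes der: "\<And>x. (U has_derivative (\<lambda>h. G x \<bullet> h)) (at x)"
    and lip: "M-lipschitz_on UNIV G"
  shows "U (x + d) \<le> U x + G x \<bullet> d + M / 2 * (norm d)\<^sup>2"
proof -
  define g where "g t = U (x + t *\<^sub>R d) - t * (G x \<bullet> d) - M / 2 * t\<^sup>2 * (norm d)\<^sup>2" for t
  have "((\<lambda>t. U (x + t *\<^sub>R d)) has_real_derivative G (x + t *\<^sub>R d) \<bullet> d) (at t)" for t
    unfolding has_field_derivative_def
    by (rule has_derivative_eq_rhs, rule has_derivative_compose[OF _ der])
       (auto intro!: derivative_eq_intros simp: fun_eq_iff)
  then have g': "(g has_real_derivative (G (x + t *\<^sub>R d) - G x) \<bullet> d - M * t * (norm d)\<^sup>2) (at t)" for t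
    unfolding g_def by (auto intro!: derivative_eq_intros simp: inner_diff_left)
  have "(G (x + t *\<^sub>R d) - G x) \<bullet> d \<le> M * t * (norm d)\<^sup>2" if "0 \<le> t" for t
  proof -
    have "(G (x + t *\<^sub>R d) - G x) \<bullet> d \<le> norm (G (x + t *\<^sub>R d) - G x) * norm d"
      by (rule norm_cauchy_schwarz)
    also have "\<dots> \<le> M * norm (t *\<^sub>R d) * norm d"
      using lipschitz_onD[OF lip, of "x + t *\<^sub>R d" x] by (simp add: dist_norm mult_right_mono)
    finally show ?thesis
      using that by (simp add: power2_eq_square mult.assoc)
  qed
  then have "g 1 \<le> g 0"
    by (intro DERIV_nonpos_imp_nonincreasing[of 0 1 g]) (use g' in force)+
  then show ?thesis
    unfolding g_def by simp
qed

lemma power2_norm_gradient_le: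
  fixes U :: "'a::real_inner \<Rightarrow> real"
  assumes der: "\<And>x. (U has_derivative (\<lambda>h. G x \<bullet> h)) (at x)"
    and lip: "M-lipschitz_on UNIV G" and "M > 0" and min: "\<And>y. U xs \<le> U y"
  shows "(norm (G x))\<^sup>2 \<le> 2 * M * (U x - U xs)"
proof -
  have "U xs \<le> U (x + (- (1/M) *\<^sub>R G x))"
    by (rule min)
  also have "\<dots> \<le> U x + G x \<bullet> (- (1/M) *\<^sub>R G x) + M / 2 * (norm (- (1/M) *\<^sub>R G x))\<^sup>2"
    by (rule lipschitz_gradient_upper_bound[OF der lip])
  also have "\<dots> = U x - (norm (G x))\<^sup>2 / (2 * M)"
    using \<open>M > 0\<close> by (simp add: power2_norm_eq_inner[symmetric] power2_eq_square field_simps)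
  finally show ?thesis
    using \<open>M > 0\<close> by (simp add: field_simps)
qed

lemma lipschitz_on_sqrt_suboptimality:
  fixes U :: "'a::real_inner \<Rightarrow> real"
  assumes der: "\<And>x. (U has_derivative (\<lambda>h. G x \<bullet> h)) (at x)"
    and lip: "M-lipschitz_on UNIV G" and "M > 0" and min: "\<And>y. U xs \<le> U y"
  shows "(sqrt (M / 2))-lipschitz_on UNIV (\<lambda>x. sqrt (U x - U xs))"
proof -
  define K where "K = sqrt (M / 2)"
  have K: "K \<ge> 0" "M = 2 * K\<^sup>2"
    using \<open>M > 0\<close> by (auto simp: K_def)
  have one_sided: "sqrt (U x' - U xs) \<le> sqrt (U x - U xs) + K * dist x' x" for x x'
  proof -
    define s d where "s = sqrt (U x - U xs)" and "d = x' - x"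
    have s: "s \<ge> 0" "U x = U xs + s\<^sup>2"
      using min[of x] by (auto simp: s_def)
    have "(norm (G x))\<^sup>2 \<le> (2 * K * s)\<^sup>2"
      using power2_norm_gradient_le[OF der lip \<open>M > 0\<close> min, of x] s K
      by (simp add: power_mult_distrib)
    then have grad: "norm (G x) \<le> 2 * K * s"
      by (rule power2_le_imp_le) (use s(1) K(1) in auto)
    have "U x' \<le> U x + G x \<bullet> d + M / 2 * (norm d)\<^sup>2"
      using lipschitz_gradient_upper_bound[OF der lip, of x d] by (simp add: d_def)
    also have "\<dots> \<le> U x + 2 * K * s * norm d + M / 2 * (norm d)\<^sup>2"
      using order_trans[OF norm_cauchy_schwarz mult_right_mono[OF grad norm_ge_zero]] by simp
    also have "\<dots> = U xs + (s + K * norm d)\<^sup>2"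
      unfolding s K by (simp add: power2_eq_square algebra_simps)
    finally have "sqrt (U x' - U xs) \<le> sqrt ((s + K * norm d)\<^sup>2)"
      by (intro real_sqrt_le_mono) simp
    also have "\<dots> = s + K * norm d"
      using s(1) K(1) by simp
    finally show ?thesis
      unfolding s_def d_def dist_norm .
  qed
  show ?thesis
    unfolding K_def[symmetric]
  proof (rule lipschitz_onI)
    show "dist (sqrt (U x - U xs)) (sqrt (U y - U xs)) \<le> K * dist x y" for x y
      using one_sided[of x y] one_sided[of y x] by (simp add: dist_real_def dist_commute abs_le_iff)
  qed (use K in simp)
qed

lemma lyapV_eq_sum_of_squares:
  fixes xs :: "'a::real_inner"
  assumes "\<gamma> > 0"
  shows "lyapV U \<gamma> lam xs x v = (U x - U xs) + (norm (v + (\<gamma>/2) *\<^sub>R (x - xs)))\<^sup>2 / 2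
     + \<gamma>\<^sup>2 / 4 * (1/2 - lam) * (norm (x - xs))\<^sup>2"
proof -
  define y where "y = x - xs"
  have sq1: "(norm (y + v /\<^sub>R \<gamma>))\<^sup>2 = (norm y)\<^sup>2 + 2 * (y \<bullet> v) / \<gamma> + (norm v)\<^sup>2 / \<gamma>\<^sup>2"
    using \<open>\<gamma> > 0\<close> unfolding power2_norm_eq_inner
    by (simp add: inner_add_left inner_add_right inner_commute[of v y] power2_eq_square divide_simps)
       (simp add: algebra_simps)
  have sq2: "(norm (v /\<^sub>R \<gamma>))\<^sup>2 = (norm v)\<^sup>2 / \<gamma>\<^sup>2"
    using \<open>\<gamma> > 0\<close> by (simp add: power_mult_distrib power_inverse divide_inverse)
  have sq3: "(norm (v + (\<gamma>/2) *\<^sub>R y))\<^sup>2 = (norm v)\<^sup>2 + \<gamma> * (y \<bullet> v) + \<gamma>\<^sup>2 / 4 * (norm y)\<^sup>2"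
    unfolding power2_norm_eq_inner
    by (simp add: inner_add_left inner_add_right inner_commute[of v y] power2_eq_square divide_simps)
       (simp add: algebra_simps)
  show ?thesis
    using \<open>\<gamma> > 0\<close> unfolding lyapV_def y_def[symmetric] sq1 sq2 sq3
    by (simp add: power2_eq_square field_simps)
qed

lemma lyapV_nonneg:
  fixes xs :: "'a::real_inner"
  assumes "\<gamma> > 0" and "lam \<le> 1/2" and "U xs \<le> U x"
  shows "0 \<le> lyapV U \<gamma> lam xs x v"
  using assms by (simp add: lyapV_eq_sum_of_squares)

lemma sqrt_lyapV_eq_norm:
  fixes xs :: "'a::real_inner"
  assumes "\<gamma> > 0" and "lam \<le> 1/2" and "U xs \<le> U x"
  shows "sqrt (lyapV U \<gamma> lam xs x v) = norm (sqrt (U x - U xs),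
     sqrt (1/2) *\<^sub>R (v + (\<gamma>/2) *\<^sub>R (x - xs)), (\<gamma>/2 * sqrt (1/2 - lam)) *\<^sub>R (x - xs))"
proof -
  have norm_triple: "norm (s, b, c) = sqrt (s\<^sup>2 + (norm b)\<^sup>2 + (norm c)\<^sup>2)" for s :: real and b c :: 'a
    by (simp add: norm_Pair add.assoc)
  have "(norm ((\<gamma>/2 * sqrt (1/2 - lam)) *\<^sub>R (x - xs)))\<^sup>2 = \<gamma>\<^sup>2 / 4 * (1/2 - lam) * (norm (x - xs))\<^sup>2"
    using assms(2) by (simp add: power_mult_distrib power_divide)
  moreover have "(norm (sqrt (1/2) *\<^sub>R (v + (\<gamma>/2) *\<^sub>R (x - xs))))\<^sup>2 = (norm (v + (\<gamma>/2) *\<^sub>R (x - xs)))\<^sup>2 / 2"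
    by (simp add: power_mult_distrib)
  ultimately show ?thesis
    using assms by (simp only: norm_triple real_sqrt_pow2 diff_ge_0_iff_ge lyapV_eq_sum_of_squares)
qed

lemma sqrt_lyapV_lower_bound:
  fixes xs :: "'a::real_inner"
  assumes "\<gamma> > 0" and "lam \<le> 1/4" and "U xs \<le> U x"
  shows "(\<gamma> * norm (x - xs) + norm v) / 8 \<le> sqrt (lyapV U \<gamma> lam xs x v)"
proof -
  define A W where "A = \<gamma> * norm (x - xs)" and "W = norm (v + (\<gamma>/2) *\<^sub>R (x - xs))"
  have "norm v \<le> W + norm ((\<gamma>/2) *\<^sub>R (x - xs))"
    using norm_triangle_ineq4[of "v + (\<gamma>/2) *\<^sub>R (x - xs)" "(\<gamma>/2) *\<^sub>R (x - xs)"]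
    by (simp add: W_def)
  then have v: "norm v \<le> W + A / 2"
    using \<open>\<gamma> > 0\<close> by (simp add: A_def)
  have "A\<^sup>2 / 16 \<le> \<gamma>\<^sup>2 / 4 * (1/2 - lam) * (norm (x - xs))\<^sup>2"
  proof -
    have "\<gamma>\<^sup>2 / 4 * (1/4) * (norm (x - xs))\<^sup>2 \<le> \<gamma>\<^sup>2 / 4 * (1/2 - lam) * (norm (x - xs))\<^sup>2"
      using \<open>lam \<le> 1/4\<close> by (intro mult_right_mono mult_left_mono) auto
    then show ?thesis
      by (simp add: A_def power_mult_distrib)
  qed
  then have "W\<^sup>2 / 2 + A\<^sup>2 / 16 \<le> lyapV U \<gamma> lam xs x v"
    using lyapV_eq_sum_of_squares[OF \<open>\<gamma> > 0\<close>, of U lam xs x v] \<open>U xs \<le> U x\<close>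
    unfolding W_def by linarith
  moreover have "(A + norm v)\<^sup>2 \<le> 64 * (W\<^sup>2 / 2 + A\<^sup>2 / 16)"
  proof -
    have "(A + norm v)\<^sup>2 \<le> (W + 3/2 * A)\<^sup>2"
      using v \<open>\<gamma> > 0\<close> by (intro power_mono) (auto simp: A_def)
    also have "\<dots> \<le> 64 * (W\<^sup>2 / 2 + A\<^sup>2 / 16)"
    proof -
      have "64 * (W\<^sup>2 / 2 + A\<^sup>2 / 16) - (W + 3/2 * A)\<^sup>2 = 3 * (W - A/2)\<^sup>2 + 28 * W\<^sup>2 + A\<^sup>2"
        by (simp add: power2_eq_square algebra_simps)
      then show ?thesis
        using zero_le_power2[of "W - A/2"] zero_le_power2[of W] zero_le_power2[of A] by linarith
    qed
    finally show ?thesis .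
  qed
  ultimately have "((A + norm v) / 8)\<^sup>2 \<le> lyapV U \<gamma> lam xs x v"
    by (simp add: power_divide)
  then show ?thesis
    unfolding A_def by (rule real_le_rsqrt)
qed

lemma norm_triple_le:
  fixes a :: "'a::real_normed_vector" and b :: "'b::real_normed_vector" and c :: "'c::real_normed_vector"
  shows "norm (a, b, c) \<le> norm a + norm b + norm c"
  using order_trans[OF norm_Pair_le add_left_mono[OF norm_Pair_le]] by (simp add: add.assoc)

lemma sqrt_lyapV_diff_le:
  fixes xs :: "'a::real_inner"
  assumes "\<gamma> > 0" and "0 \<le> lam" and "lam \<le> 1/2" and "U xs \<le> U x" and "U xs \<le> U x'"
  shows "\<bar>sqrt (lyapV U \<gamma> lam xs x v) - sqrt (lyapV U \<gamma> lam xs x' v')\<bar>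
    \<le> \<bar>sqrt (U x - U xs) - sqrt (U x' - U xs)\<bar> + norm ((v - v') + (\<gamma>/2) *\<^sub>R (x - x'))
      + \<gamma> * norm (x - x')"
proof -
  define c where "c = \<gamma>/2 * sqrt (1/2 - lam)"
  have "c \<le> \<gamma>/2"
    unfolding c_def using assms(1-3) by (intro mult_right_le_one_le) auto
  moreover have "0 \<le> c"
    using assms(1,3) by (simp add: c_def)
  ultimately have c: "0 \<le> c" "c \<le> \<gamma>"
    using assms(1) by auto
  define p where "p x v = (sqrt (U x - U xs), sqrt (1/2) *\<^sub>R (v + (\<gamma>/2) *\<^sub>R (x - xs)), c *\<^sub>R (x - xs))"
    for x v
  have "\<bar>sqrt (lyapV U \<gamma> lam xs x v) - sqrt (lyapV U \<gamma> lam xs x' v')\<bar> = \<bar>norm (p x v) - norm (p x' v')\<bar>"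
    using assms by (simp add: sqrt_lyapV_eq_norm p_def c_def)
  also have "\<dots> \<le> norm (p x v - p x' v')"
    by (rule norm_triangle_ineq3)
  also have "\<dots> \<le> \<bar>sqrt (U x - U xs) - sqrt (U x' - U xs)\<bar>
      + norm (sqrt (1/2) *\<^sub>R ((v - v') + (\<gamma>/2) *\<^sub>R (x - x'))) + norm (c *\<^sub>R (x - x'))"
  proof -
    have "p x v - p x' v' = (sqrt (U x - U xs) - sqrt (U x' - U xs),
        sqrt (1/2) *\<^sub>R ((v - v') + (\<gamma>/2) *\<^sub>R (x - x')), c *\<^sub>R (x - x'))"
      by (simp add: p_def algebra_simps)
    then show ?thesis
      using norm_triple_le[of "sqrt (U x - U xs) - sqrt (U x' - U xs)"
          "sqrt (1/2) *\<^sub>R ((v - v') + (\<gamma>/2) *\<^sub>R (x - x'))" "c *\<^sub>R (x - x')"]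
      by (simp only: real_norm_def)
  qed
  also have "\<dots> \<le> \<bar>sqrt (U x - U xs) - sqrt (U x' - U xs)\<bar> + norm ((v - v') + (\<gamma>/2) *\<^sub>R (x - x'))
      + \<gamma> * norm (x - x')"
    using c by (intro add_mono) (auto simp: mult_left_le_one_le mult_right_mono)
  finally show ?thesis .
qed

lemma sqrt_lyapV_lipschitz:
  fixes xs :: "'a::real_inner"
  assumes "\<gamma> > 0" and "0 \<le> lam" and "lam \<le> 1/2" and min: "\<And>y. U xs \<le> U y"
    and lip: "L-lipschitz_on UNIV (\<lambda>x. sqrt (U x - U xs))" and "L \<le> \<gamma>"
  shows "\<bar>sqrt (lyapV U \<gamma> lam xs x v) - sqrt (lyapV U \<gamma> lam xs x' v')\<bar>
    \<le> 3 * \<gamma> * norm (x - x') + norm (v - v')"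
proof -
  have "\<bar>sqrt (U x - U xs) - sqrt (U x' - U xs)\<bar> \<le> \<gamma> * norm (x - x')"
    using lipschitz_onD[OF lip, of x x'] mult_right_mono[OF \<open>L \<le> \<gamma>\<close> norm_ge_zero[of "x - x'"]]
    by (simp add: dist_real_def dist_norm)
  moreover have "norm ((v - v') + (\<gamma>/2) *\<^sub>R (x - x')) \<le> norm (v - v') + \<gamma>/2 * norm (x - x')"
    using norm_triangle_ineq[of "v - v'" "(\<gamma>/2) *\<^sub>R (x - x')"] \<open>\<gamma> > 0\<close> by simp
  moreover have "0 \<le> \<gamma> * norm (x - x')"
    using \<open>\<gamma> > 0\<close> by simp
  ultimately show ?thesis
    using sqrt_lyapV_diff_le[of \<gamma> lam U xs x x' v v'] assms(1-3) min[of x] min[of x'] by linarith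
qed

lemma sqrt_mult_abnorm_le_norm_sum:
  fixes y v :: "'a::real_inner"
  assumes "\<gamma> > 0" and "M > 0" and "M \<le> \<gamma>\<^sup>2"
  shows "sqrt M * abnorm (1/M) (1/\<gamma>) y v \<le> \<gamma> * norm y + norm v"
proof -
  have "2 * (M / \<gamma>) * (y \<bullet> v) \<le> 2 * \<gamma> * (norm y * norm v)"
  proof -
    have "M / \<gamma> \<le> \<gamma>"
      using assms by (simp add: divide_simps power2_eq_square)
    then show ?thesis
      using norm_cauchy_schwarz[of y v] assms(1,2)
      by (intro mult_left_mono order_trans[OF mult_left_mono mult_right_mono]) auto
  qed
  moreover have "M * (norm y)\<^sup>2 \<le> \<gamma>\<^sup>2 * (norm y)\<^sup>2"
    using assms(3) by (simp add: mult_right_mono)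
  ultimately have "M * ((norm y)\<^sup>2 + 2 * (1/\<gamma>) * (y \<bullet> v) + (1/M) * (norm v)\<^sup>2) \<le> (\<gamma> * norm y + norm v)\<^sup>2"
    using assms(1,2) by (simp add: power2_eq_square algebra_simps)
  then have "sqrt M * abnorm (1/M) (1/\<gamma>) y v \<le> sqrt ((\<gamma> * norm y + norm v)\<^sup>2)"
    unfolding abnorm_def real_sqrt_mult[symmetric] by (rule real_sqrt_le_mono)
  then show ?thesis
    using assms(1) by simp
qed

lemma norm_sum_le_mult_abnorm:
  fixes y v :: "'a::real_inner"
  assumes "\<gamma> > 0" and "M > 0" and "8 * M \<le> \<gamma>\<^sup>2"
  shows "\<gamma> * norm y + norm v \<le> 2 * \<gamma> * abnorm (1/M) (1/\<gamma>) y v"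
proof -
  define A N Q where "A = \<gamma> * norm y" and "N = norm v"
    and "Q = (norm y)\<^sup>2 + 2 * (1/\<gamma>) * (y \<bullet> v) + (1/M) * (norm v)\<^sup>2"
  have "A\<^sup>2 - 2 * A * N + 8 * N\<^sup>2 \<le> \<gamma>\<^sup>2 * Q"
  proof -
    have "\<gamma>\<^sup>2 * Q = A\<^sup>2 + 2 * \<gamma> * (y \<bullet> v) + \<gamma>\<^sup>2 / M * N\<^sup>2"
      using assms(1,2) by (simp add: A_def N_def Q_def power2_eq_square field_simps)
    moreover have "- (A * N) \<le> \<gamma> * (y \<bullet> v)"
      using mult_left_mono[OF norm_cauchy_schwarz[of "- y" v], of \<gamma>] assms(1)
      by (simp add: A_def N_def)
    moreover have "8 * N\<^sup>2 \<le> \<gamma>\<^sup>2 / M * N\<^sup>2"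
      using assms by (intro mult_right_mono) (simp_all add: field_simps)
    ultimately show ?thesis
      by linarith
  qed
  moreover have "(A + N)\<^sup>2 \<le> 4 * (A\<^sup>2 - 2 * A * N + 8 * N\<^sup>2)"
  proof -
    have "4 * (A\<^sup>2 - 2 * A * N + 8 * N\<^sup>2) - (A + N)\<^sup>2 = 3 * (A - 2 * N)\<^sup>2 + 2 * A * N + 19 * N\<^sup>2"
      by (simp add: power2_eq_square algebra_simps)
    moreover have "0 \<le> A * N"
      using assms(1) by (simp add: A_def N_def)
    ultimately show ?thesis
      using zero_le_power2[of "A - 2 * N"] zero_le_power2[of N] by linarith
  qed
  ultimately have "(A + N)\<^sup>2 \<le> (2 * \<gamma>)\<^sup>2 * Q"
    by (simp add: power_mult_distrib)
  then have "A + N \<le> sqrt ((2 * \<gamma>)\<^sup>2 * Q)"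
    by (rule real_le_rsqrt)
  then show ?thesis
    using assms(1) by (simp add: real_sqrt_mult abnorm_def A_def N_def Q_def)
qed

theorem lemma9:
  fixes U :: "'a::euclidean_space \<Rightarrow> real" and G :: "'a \<Rightarrow> 'a"
    and M m \<gamma> :: real and xs :: 'a
  assumes "M > 0" and "m > 0"
    and "\<gamma> \<ge> sqrt (8 * M)"
    and "C2_with_gradient U G"
    and "M-lipschitz_on UNIV G"
    and "strongly_convex m U"
    and "\<forall>y. U xs \<le> U y"
  defines "lam \<equiv> min (1/4) (m / \<gamma>\<^sup>2)"
  defines "a \<equiv> 1 / M" and "b \<equiv> 1 / \<gamma>"
  shows "(\<forall>x v. lyapV U \<gamma> lam xs x v \<ge> 0
            \<and> sqrt (lyapV U \<gamma> lam xs x v) \<ge> 1/8 * (\<gamma> * norm (x - xs) + norm v)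
            \<and> 1/8 * (\<gamma> * norm (x - xs) + norm v) \<ge> sqrt M / 8 * abnorm a b (x - xs) v)
         \<and> (\<forall>x v x' v'. \<bar>sqrt (lyapV U \<gamma> lam xs x v) - sqrt (lyapV U \<gamma> lam xs x' v')\<bar>
            \<le> 8 * \<gamma> * abnorm a b (x - x') (v - v'))"
proof -
  have "\<gamma> > 0" and \<gamma>M: "8 * M \<le> \<gamma>\<^sup>2"
    using assms(1,3) order_less_le_trans[of 0 "sqrt (8 * M)" \<gamma>] sqrt_le_D by auto
  have lam: "0 \<le> lam" "lam \<le> 1/4"
    unfolding lam_def using assms(2) min.cobounded1[of "1/4" "m / \<gamma>\<^sup>2"] by auto
  have min: "\<And>y. U xs \<le> U y"
    using assms(7) by blast
  have der: "\<And>x. (U has_derivative (\<lambda>h. G x \<bullet> h)) (at x)"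
    using assms(4) by (simp add: C2_with_gradient_def)
  have "sqrt (M / 2) \<le> \<gamma>"
    using \<gamma>M \<open>\<gamma> > 0\<close> assms(1) by (intro real_le_lsqrt) auto
  with lipschitz_on_sqrt_suboptimality[OF der assms(5,1) min]
  have lipschitz: "\<bar>sqrt (lyapV U \<gamma> lam xs x v) - sqrt (lyapV U \<gamma> lam xs x' v')\<bar>
      \<le> 3 * \<gamma> * norm (x - x') + norm (v - v')" for x v x' v'
    by (intro sqrt_lyapV_lipschitz) (use \<open>\<gamma> > 0\<close> lam min in auto)
  show ?thesis
    unfolding a_def b_def
  proof (intro conjI allI)
    fix x v x' v'
    show "0 \<le> lyapV U \<gamma> lam xs x v"
      by (rule lyapV_nonneg) (use \<open>\<gamma> > 0\<close> lam min in auto)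
    show "1/8 * (\<gamma> * norm (x - xs) + norm v) \<le> sqrt (lyapV U \<gamma> lam xs x v)"
      using sqrt_lyapV_lower_bound[of \<gamma> lam U xs x v] \<open>\<gamma> > 0\<close> lam min by simp
    show "sqrt M / 8 * abnorm (1/M) (1/\<gamma>) (x - xs) v \<le> 1/8 * (\<gamma> * norm (x - xs) + norm v)"
      using sqrt_mult_abnorm_le_norm_sum[OF \<open>\<gamma> > 0\<close> assms(1), of "x - xs" v] \<gamma>M assms(1) by simp
    show "\<bar>sqrt (lyapV U \<gamma> lam xs x v) - sqrt (lyapV U \<gamma> lam xs x' v')\<bar>
        \<le> 8 * \<gamma> * abnorm (1/M) (1/\<gamma>) (x - x') (v - v')"
      using lipschitz[of x v x' v'] norm_sum_le_mult_abnorm[OF \<open>\<gamma> > 0\<close> assms(1) \<gamma>M, of "x - x'" "v - v'"]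
        mult_nonneg_nonneg[of \<gamma> "norm (x - x')"] \<open>\<gamma> > 0\<close> norm_ge_zero[of "v - v'"] by linarith
  qed
qed

end
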